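(* Let $T$ be an unmixed tree. Then the stable complex $\mathcal{S}(T)$ is shellable.
   Context: For a finite simple graph $G=(V,E)$, $N(v)=\{u: uv\in E\}$ and $N(D)=\bigcup_{v\in D}N(v)$. A set $D\subseteq V$ is a total dominating set (TD-set) if $N(D)=V$, and a minimal TD-set if no proper subset is a TD-set. $G$ is unmixed if all minimal TD-sets of $G$ have the same size. The stable complex $\mathcal{S}(G)$ is the simplicial complex on $V$ whose facets are the sets $V\setminus D$ with $D$ a minimal TD-set of $G$. A pure simplicial complex is shellable if its facets admit an ordering $F_1,\dots,F_m$ such that for all $1\le i<j\le m$ there exist $v\in F_j\setminus F_i$ and $k<j$ with $F_j\setminus F_k=\{v\}$. *)

theory Defs
  imports Main
begin

definition simple_graph :: "'a set \<Rightarrow> 'a set set \<Rightarrow> bool" where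
  "simple_graph V E \<longleftrightarrow> finite V \<and> (\<forall>e\<in>E. e \<subseteq> V \<and> card e = 2)"

definition nbhd :: "'a set set \<Rightarrow> 'a \<Rightarrow> 'a set" where
  "nbhd E v = {u. {u, v} \<in> E}"

definition nbhd_set :: "'a set set \<Rightarrow> 'a set \<Rightarrow> 'a set" where
  "nbhd_set E D = (\<Union>v\<in>D. nbhd E v)"

definition is_walk :: "'a set \<Rightarrow> 'a set set \<Rightarrow> 'a list \<Rightarrow> bool" where
  "is_walk V E p \<longleftrightarrow> p \<noteq> [] \<and> set p \<subseteq> V \<and>
     (\<forall>i. Suc i < length p \<longrightarrow> {p ! i, p ! Suc i} \<in> E)"

definition connected_graph :: "'a set \<Rightarrow> 'a set set \<Rightarrow> bool" where
  "connected_graph V E \<longleftrightarrow> V \<noteq> {} \<and>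
     (\<forall>u\<in>V. \<forall>v\<in>V. \<exists>p. is_walk V E p \<and> hd p = u \<and> last p = v)"

definition has_cycle :: "'a set \<Rightarrow> 'a set set \<Rightarrow> bool" where
  "has_cycle V E \<longleftrightarrow> (\<exists>p. is_walk V E p \<and> distinct p \<and> length p \<ge> 3 \<and> {last p, hd p} \<in> E)"

definition is_tree :: "'a set \<Rightarrow> 'a set set \<Rightarrow> bool" where
  "is_tree V E \<longleftrightarrow> simple_graph V E \<and> connected_graph V E \<and> \<not> has_cycle V E"

definition total_dom_set :: "'a set \<Rightarrow> 'a set set \<Rightarrow> 'a set \<Rightarrow> bool" where
  "total_dom_set V E D \<longleftrightarrow> D \<subseteq> V \<and> nbhd_set E D = V"

definition minimal_total_dom_set :: "'a set \<Rightarrow> 'a set set \<Rightarrow> 'a set \<Rightarrow> bool" where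
  "minimal_total_dom_set V E D \<longleftrightarrow> total_dom_set V E D \<and>
     (\<forall>D'. D' \<subset> D \<longrightarrow> \<not> total_dom_set V E D')"

definition unmixed :: "'a set \<Rightarrow> 'a set set \<Rightarrow> bool" where
  "unmixed V E \<longleftrightarrow> (\<forall>D1 D2. minimal_total_dom_set V E D1 \<longrightarrow> minimal_total_dom_set V E D2
      \<longrightarrow> card D1 = card D2)"

definition stable_complex_facets :: "'a set \<Rightarrow> 'a set set \<Rightarrow> 'a set set" where
  "stable_complex_facets V E = {V - D | D. minimal_total_dom_set V E D}"

definition pure_facets :: "'a set set \<Rightarrow> bool" where
  "pure_facets \<F> \<longleftrightarrow> (\<forall>F\<in>\<F>. \<forall>G\<in>\<F>. card F = card G)"

definition shelling_order :: "'a set list \<Rightarrow> bool" where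
  "shelling_order Fs \<longleftrightarrow> (\<forall>i j. i < j \<longrightarrow> j < length Fs \<longrightarrow>
     (\<exists>v \<in> Fs ! j - Fs ! i. \<exists>k < j. Fs ! j - Fs ! k = {v}))"

definition shellable :: "'a set set \<Rightarrow> bool" where
  "shellable \<F> \<longleftrightarrow> pure_facets \<F> \<and>
     (\<exists>Fs. distinct Fs \<and> set Fs = \<F> \<and> shelling_order Fs)"

end

theory Submission
  imports Defs
begin

text \<open>
  For a graph G the complements of total dominating sets are exactly the sets containing no
  neighbourhood N(v), so the stable complex is the independence complex of the hypergraph of
  neighbourhoods. For a forest this hypergraph always has an edge N(v) all of whose vertices but
  one lie in no other neighbourhood: otherwise one could walk forever without backtracking,
  alternating between centres v and shared neighbours. Given such an edge and its exceptional
  vertex x, the facets avoiding x are the facets of the deletion of x, the facets containing x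
  are x joined to the facets of the link of x, and every link facet lies in a deletion facet.
  Both smaller hypergraphs have the same leaf property, so by induction we may list the deletion
  facets in shelling order followed by the cones over the link facets. Unmixedness is only needed
  for purity.
\<close>

definition independent :: "'a set set \<Rightarrow> 'a set \<Rightarrow> bool" where
  "independent H F \<longleftrightarrow> (\<forall>e\<in>H. \<not> e \<subseteq> F)"

definition max_independent_sets :: "'a set \<Rightarrow> 'a set set \<Rightarrow> 'a set set" where
  "max_independent_sets W H =
     {F. F \<subseteq> W \<and> independent H F \<and> (\<forall>y\<in>W - F. \<not> independent H (insert y F))}"

definition has_leaf :: "'a set set \<Rightarrow> bool" where
  "has_leaf G \<longleftrightarrow> (\<exists>g\<in>G. \<exists>a. \<forall>y\<in>g - {a}. \<forall>g'\<in>G. y \<in> g' \<longrightarrow> g' = g)"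

definition edge_shrinking :: "'a set set \<Rightarrow> 'a set set \<Rightarrow> bool" where
  "edge_shrinking G H \<longleftrightarrow> (\<exists>\<phi>. inj_on \<phi> G \<and> (\<forall>g\<in>G. \<phi> g \<in> H \<and> g \<subseteq> \<phi> g))"

text \<open>Edges may be shrunk so that the property passes to links, where removing a vertex
  can shrink edges and merge distinct ones.\<close>

definition leafy :: "'a set set \<Rightarrow> bool" where
  "leafy H \<longleftrightarrow> (\<forall>G. G \<noteq> {} \<and> edge_shrinking G H \<longrightarrow> has_leaf G)"

lemma edge_shrinking_refl: "edge_shrinking H H"
  unfolding edge_shrinking_def by (intro exI[of _ id]) simp

lemma edge_shrinking_mono: "edge_shrinking G H \<Longrightarrow> H \<subseteq> H' \<Longrightarrow> edge_shrinking G H'"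
  unfolding edge_shrinking_def by blast

lemma edge_shrinking_Diff_image:
  assumes "edge_shrinking G ((\<lambda>f. f - {x}) ` H)"
  shows "edge_shrinking G H"
proof -
  obtain \<phi> where \<phi>: "inj_on \<phi> G" "\<forall>g\<in>G. \<phi> g \<in> (\<lambda>f. f - {x}) ` H \<and> g \<subseteq> \<phi> g"
    using assms unfolding edge_shrinking_def by blast
  then have "\<forall>g\<in>G. \<exists>f. f \<in> H \<and> \<phi> g = f - {x}"
    by blast
  then obtain \<psi> where \<psi>: "\<forall>g\<in>G. \<psi> g \<in> H \<and> \<phi> g = \<psi> g - {x}"
    by (rule bchoice[THEN exE])
  have "inj_on \<psi> G"
    using \<phi>(1) \<psi> by (metis inj_on_def)
  then show ?thesis
    unfolding edge_shrinking_def using \<phi>(2) \<psi> by blast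
qed

lemma leafy_subset:
  assumes "leafy H" "H' \<subseteq> H"
  shows "leafy H'"
  unfolding leafy_def
proof (intro allI impI)
  fix G assume "G \<noteq> {} \<and> edge_shrinking G H'"
  then show "has_leaf G"
    using assms edge_shrinking_mono[of G H' H] unfolding leafy_def by blast
qed

lemma leafy_Diff_image:
  assumes "leafy H"
  shows "leafy ((\<lambda>f. f - {x}) ` H)"
  unfolding leafy_def
proof (intro allI impI)
  fix G assume "G \<noteq> {} \<and> edge_shrinking G ((\<lambda>f. f - {x}) ` H)"
  then show "has_leaf G"
    using assms edge_shrinking_Diff_image[of G x H] unfolding leafy_def by blast
qed

lemma leafy_obtains_private_edge:
  assumes "leafy H" "H \<noteq> {}" "{} \<notin> H"
  obtains e x where "e \<in> H" "x \<in> e" "\<forall>y\<in>e - {x}. \<forall>f\<in>H. y \<in> f \<longrightarrow> f = e"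
proof -
  have "has_leaf H"
    using assms(1,2) edge_shrinking_refl[of H] unfolding leafy_def by blast
  then obtain e a where e: "e \<in> H" and a: "\<forall>y\<in>e - {a}. \<forall>f\<in>H. y \<in> f \<longrightarrow> f = e"
    unfolding has_leaf_def by blast
  obtain z where "z \<in> e"
    using e assms(3) by (metis ex_in_conv)
  then obtain x where x: "x \<in> e" "e - {x} \<subseteq> e - {a}"
    by (cases "a \<in> e") auto
  show ?thesis
    using that[OF e x(1)] a x(2) by blast
qed

lemma no_leaf_obtains_chain:
  assumes "\<not> has_leaf G" "G \<noteq> {}"
  obtains g a where "\<And>n. g n \<in> G" "\<And>n. a (Suc n) \<in> g n - {a n}"
    "\<And>n. a (Suc n) \<in> g (Suc n)" "\<And>n. g (Suc n) \<noteq> g n"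
proof -
  let ?next = "\<lambda>(a, g) (a', g'). a' \<in> g - {a} \<and> a' \<in> g' \<and> g' \<noteq> g"
  have shared: "\<exists>y\<in>g - {a}. \<exists>g'\<in>G. y \<in> g' \<and> g' \<noteq> g" if "g \<in> G" for g a
    using assms(1) that unfolding has_leaf_def by auto
  have "\<exists>s. \<forall>n. snd (s n) \<in> G \<and> ?next (s n) (s (Suc n))"
  proof (rule dependent_nat_choice[of "\<lambda>_ p. snd p \<in> G" "\<lambda>_. ?next"])
    show "\<exists>p. snd p \<in> G"
      using assms(2) by auto
    fix p :: "'a \<times> 'a set" and n assume "snd p \<in> G"
    moreover obtain a g where "p = (a, g)"
      by fastforce
    ultimately show "\<exists>q. snd q \<in> G \<and> ?next p q"
      using shared[of g a] by fastforce
  qed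
  then obtain s where "\<And>n. snd (s n) \<in> G \<and> ?next (s n) (s (Suc n))"
    by blast
  then show ?thesis
    using that[of "\<lambda>n. snd (s n)" "\<lambda>n. fst (s n)"] by (simp add: case_prod_beta)
qed

lemma independent_extends_to_max:
  assumes "finite W" "F \<subseteq> W" "independent H F"
  shows "\<exists>M\<in>max_independent_sets W H. F \<subseteq> M"
  using assms(2,3)
proof (induction "card (W - F)" arbitrary: F rule: less_induct)
  case less
  show ?case
  proof (cases "F \<in> max_independent_sets W H")
    case False
    then obtain y where y: "y \<in> W - F" "independent H (insert y F)"
      using less.prems unfolding max_independent_sets_def by blast
    have "card (W - insert y F) < card (W - F)"
      using y assms(1) by (metis Diff_insert card_Diff1_less finite_Diff)
    then show ?thesis
      using less.hyps[of "insert y F"] y less.prems by blast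
  qed blast
qed

lemma independent_Diff_image_iff:
  "independent ((\<lambda>f. f - {x}) ` H) L \<longleftrightarrow> independent H (insert x L)"
  unfolding independent_def by (simp add: Diff_subset_conv)

lemma not_independent_insert_private_vertex:
  assumes "e \<in> H" "e \<subseteq> W" "x \<in> e"
    and only_in_e: "\<forall>y\<in>e - {x}. \<forall>f\<in>H. y \<in> f \<longrightarrow> f = e"
    and maximal: "\<And>y. y \<in> W - {x} - F \<Longrightarrow> \<not> independent {f\<in>H. x \<notin> f} (insert y F)"
  shows "\<not> independent H (insert x F)"
proof
  assume indep: "independent H (insert x F)"
  then obtain z where z: "z \<in> e" "z \<notin> insert x F"
    using assms(1) unfolding independent_def by blast
  have "independent {f\<in>H. x \<notin> f} (insert z F)"
    unfolding independent_def
  proof (intro ballI notI)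
    fix f assume f: "f \<in> {f\<in>H. x \<notin> f}" "f \<subseteq> insert z F"
    show False
    proof (cases "z \<in> f")
      case True
      then have "f = e"
        using only_in_e z f(1) by blast
      then show False
        using f(1) assms(3) by blast
    next
      case False
      then have "f \<subseteq> insert x F"
        using f(2) by blast
      then show False
        using indep f(1) unfolding independent_def by blast
    qed
  qed
  moreover have "z \<in> W - {x} - F"
    using z assms(2) by blast
  ultimately show False
    using maximal by blast
qed

lemma max_independent_sets_not_containing:
  assumes "e \<in> H" "e \<subseteq> W" "x \<in> e"
    and only_in_e: "\<forall>y\<in>e - {x}. \<forall>f\<in>H. y \<in> f \<longrightarrow> f = e"
  shows "{F \<in> max_independent_sets W H. x \<notin> F} = max_independent_sets (W - {x}) {f\<in>H. x \<notin> f}"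
    (is "_ = max_independent_sets ?W' ?Hd")
proof (intro set_eqI iffI)
  fix F assume "F \<in> {F \<in> max_independent_sets W H. x \<notin> F}"
  then have F: "F \<subseteq> W" "independent H F" "\<And>y. y \<in> W - F \<Longrightarrow> \<not> independent H (insert y F)"
    "x \<notin> F"
    unfolding max_independent_sets_def by auto
  have "\<not> independent ?Hd (insert y F)" if y: "y \<in> ?W' - F" for y
  proof -
    obtain f where f: "f \<in> H" "f \<subseteq> insert y F"
      using F(3) y unfolding independent_def by blast
    then have "x \<notin> f"
      using F(4) y by blast
    with f show ?thesis
      unfolding independent_def by blast
  qed
  moreover have "independent ?Hd F"
    using F(2) unfolding independent_def by blast
  moreover have "F \<subseteq> ?W'"
    using F(1,4) by blast
  ultimately show "F \<in> max_independent_sets ?W' ?Hd"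
    unfolding max_independent_sets_def by blast
next
  fix F assume "F \<in> max_independent_sets ?W' ?Hd"
  then have F: "F \<subseteq> ?W'" "independent ?Hd F" "\<And>y. y \<in> ?W' - F \<Longrightarrow> \<not> independent ?Hd (insert y F)"
    unfolding max_independent_sets_def by auto
  have "\<not> independent H (insert y F)" if "y \<in> W - F" for y
  proof (cases "y = x")
    case True
    then show ?thesis
      using not_independent_insert_private_vertex[OF assms F(3)] by simp
  next
    case False
    then show ?thesis
      using F(3) that unfolding independent_def by blast
  qed
  moreover have "independent H F"
    using F(1,2) unfolding independent_def by blast
  ultimately show "F \<in> {F \<in> max_independent_sets W H. x \<notin> F}"
    using F(1) unfolding max_independent_sets_def by blast
qed

lemma max_independent_sets_containing:
  assumes "x \<in> W"
  shows "{F \<in> max_independent_sets W H. x \<in> F}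
           = insert x ` max_independent_sets (W - {x}) ((\<lambda>f. f - {x}) ` H)"
    (is "_ = insert x ` max_independent_sets ?W' ?Hl")
proof (intro set_eqI iffI)
  fix F assume "F \<in> {F \<in> max_independent_sets W H. x \<in> F}"
  then have F: "F \<subseteq> W" "independent H F" "\<forall>y\<in>W - F. \<not> independent H (insert y F)" "x \<in> F"
    unfolding max_independent_sets_def by auto
  have "\<not> independent ?Hl (insert y (F - {x}))" if "y \<in> ?W' - (F - {x})" for y
  proof -
    have "insert x (insert y (F - {x})) = insert y F"
      using F(4) by blast
    moreover have "y \<in> W - F"
      using that by blast
    ultimately show ?thesis
      using F(3) by (simp add: independent_Diff_image_iff)
  qed
  moreover have "independent ?Hl (F - {x})"
    using F(2,4) by (simp add: independent_Diff_image_iff insert_absorb)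
  ultimately have "F - {x} \<in> max_independent_sets ?W' ?Hl"
    unfolding max_independent_sets_def using F(1) by blast
  then show "F \<in> insert x ` max_independent_sets ?W' ?Hl"
    using F(4) by (metis insert_Diff image_eqI)
next
  fix F assume "F \<in> insert x ` max_independent_sets ?W' ?Hl"
  then obtain L where F: "F = insert x L" and L: "L \<subseteq> ?W'" "independent H (insert x L)"
    "\<forall>y\<in>?W' - L. \<not> independent H (insert x (insert y L))"
    unfolding max_independent_sets_def independent_Diff_image_iff by blast
  have "\<not> independent H (insert y F)" if "y \<in> W - F" for y
    using L(3) that unfolding F by (metis Diff_iff insert_commute insertCI singletonD)
  then show "F \<in> {F \<in> max_independent_sets W H. x \<in> F}"
    unfolding max_independent_sets_def using F L(1,2) assms by blast
qed

lemma max_independent_sets_link_subset_deletion: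
  assumes "finite W" "L \<in> max_independent_sets (W - {x}) ((\<lambda>f. f - {x}) ` H)"
  shows "\<exists>M\<in>max_independent_sets (W - {x}) {f\<in>H. x \<notin> f}. L \<subseteq> M"
proof (rule independent_extends_to_max)
  show "finite (W - {x})"
    using assms(1) by blast
  show "L \<subseteq> W - {x}"
    using assms(2) unfolding max_independent_sets_def by blast
  have "independent H (insert x L)"
    using assms(2) unfolding max_independent_sets_def independent_Diff_image_iff by blast
  then show "independent {f\<in>H. x \<notin> f} L"
    unfolding independent_def by blast
qed

lemma distinct_append_map_insert:
  assumes "distinct As" "distinct Ls" "\<forall>A\<in>set As. x \<notin> A" "\<forall>L\<in>set Ls. x \<notin> L"
  shows "distinct (As @ map (insert x) Ls)"
proof -
  have "inj_on (insert x) (set Ls)"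
    using assms(4) by (intro inj_onI) (metis Diff_insert_absorb)
  then show ?thesis
    using assms by (auto simp: distinct_map)
qed

lemma shelling_order_append:
  assumes As: "shelling_order As" and Bs: "shelling_order Bs"
    and cross: "\<And>B. B \<in> set Bs \<Longrightarrow> \<exists>v. (\<forall>A\<in>set As. v \<notin> A) \<and> (\<exists>A\<in>set As. B - A = {v})"
  shows "shelling_order (As @ Bs)" (is "shelling_order ?Fs")
  unfolding shelling_order_def
proof (intro allI impI)
  fix i j assume ij: "i < j" and j: "j < length ?Fs"
  let ?n = "length As"
  show "\<exists>v\<in>?Fs ! j - ?Fs ! i. \<exists>k<j. ?Fs ! j - ?Fs ! k = {v}"
  proof (cases "j < ?n")
    case True
    then obtain v k where "v \<in> As ! j - As ! i" "k < j" "As ! j - As ! k = {v}"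
      using As ij unfolding shelling_order_def by blast
    with True ij show ?thesis
      by (intro bexI[of _ v] exI[of _ k]) (auto simp: nth_append)
  next
    case jB: False
    let ?B = "Bs ! (j - ?n)"
    have B: "?Fs ! j = ?B" "?B \<in> set Bs"
      using jB j by (auto simp: nth_append)
    show ?thesis
    proof (cases "i < ?n")
      case True
      obtain v A where v: "\<forall>A\<in>set As. v \<notin> A" "A \<in> set As" "?B - A = {v}"
        using cross[OF B(2)] by blast
      then obtain k where k: "k < ?n" "As ! k = A"
        by (metis in_set_conv_nth)
      have "v \<in> ?Fs ! j - ?Fs ! i"
        using B(1) v True by (auto simp: nth_append)
      moreover have "?Fs ! j - ?Fs ! k = {v}"
        using B(1) v(3) k by (simp add: nth_append)
      ultimately show ?thesis
        using k(1) jB by (intro bexI[of _ v] exI[of _ k]) auto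
    next
      case False
      then have "i - ?n < j - ?n" "j - ?n < length Bs"
        using ij jB j by auto
      then obtain v k where "v \<in> ?B - Bs ! (i - ?n)" "k < j - ?n" "?B - Bs ! k = {v}"
        using Bs unfolding shelling_order_def by blast
      with False jB j ij show ?thesis
        by (intro bexI[of _ v] exI[of _ "k + ?n"]) (auto simp: nth_append)
    qed
  qed
qed

lemma shelling_order_map_insert:
  assumes Ls: "shelling_order Ls" and x: "\<forall>L\<in>set Ls. x \<notin> L"
  shows "shelling_order (map (insert x) Ls)"
  unfolding shelling_order_def
proof (intro allI impI)
  fix i j assume ij: "i < j" and j: "j < length (map (insert x) Ls)"
  then have "j < length Ls"
    by simp
  then obtain v k where v: "v \<in> Ls ! j - Ls ! i" "k < j" "Ls ! j - Ls ! k = {v}"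
    using Ls ij unfolding shelling_order_def by blast
  have "x \<notin> Ls ! j"
    using x j by simp
  with v have "v \<in> insert x (Ls ! j) - insert x (Ls ! i)"
    "insert x (Ls ! j) - insert x (Ls ! k) = {v}"
    by blast+
  with ij j v(2) show "\<exists>v\<in>map (insert x) Ls ! j - map (insert x) Ls ! i.
      \<exists>k<j. map (insert x) Ls ! j - map (insert x) Ls ! k = {v}"
    by (intro bexI[of _ v] exI[of _ k]) auto
qed

lemma shelling_order_deletion_then_link:
  assumes "finite W" "e \<in> H" "e \<subseteq> W" "x \<in> e"
    and only_in_e: "\<forall>y\<in>e - {x}. \<forall>f\<in>H. y \<in> f \<longrightarrow> f = e"
    and As: "distinct As" "set As = max_independent_sets (W - {x}) {f\<in>H. x \<notin> f}" "shelling_order As"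
    and Ls: "distinct Ls" "set Ls = max_independent_sets (W - {x}) ((\<lambda>f. f - {x}) ` H)"
      "shelling_order Ls"
  shows "distinct (As @ map (insert x) Ls) \<and> set (As @ map (insert x) Ls) = max_independent_sets W H
    \<and> shelling_order (As @ map (insert x) Ls)"
proof -
  have "x \<in> W"
    using assms(3,4) by blast
  have "max_independent_sets W H
      = {F \<in> max_independent_sets W H. x \<notin> F} \<union> {F \<in> max_independent_sets W H. x \<in> F}"
    by blast
  also have "\<dots> = set As \<union> insert x ` set Ls"
    using max_independent_sets_not_containing[OF assms(2-4) only_in_e]
      max_independent_sets_containing[OF \<open>x \<in> W\<close>, of H] As(2) Ls(2) by simp
  finally have split: "max_independent_sets W H = set As \<union> insert x ` set Ls" .
  have x_As: "\<forall>A\<in>set As. x \<notin> A" and x_Ls: "\<forall>L\<in>set Ls. x \<notin> L"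
    using As(2) Ls(2) unfolding max_independent_sets_def by auto
  have "\<exists>v. (\<forall>A\<in>set As. v \<notin> A) \<and> (\<exists>A\<in>set As. B - A = {v})"
    if B: "B \<in> set (map (insert x) Ls)" for B
  proof -
    obtain L where L: "L \<in> set Ls" "B = insert x L"
      using B by auto
    then obtain A where "A \<in> set As" "L \<subseteq> A"
      using max_independent_sets_link_subset_deletion[OF assms(1), of L x H]
      unfolding As(2) Ls(2) by blast
    moreover from this have "B - A = {x}"
      using L(2) x_As by blast
    ultimately show ?thesis
      using x_As by blast
  qed
  then have "shelling_order (As @ map (insert x) Ls)"
    using shelling_order_append[OF As(3) shelling_order_map_insert[OF Ls(3) x_Ls]] by blast
  then show ?thesis
    using distinct_append_map_insert[OF As(1) Ls(1) x_As x_Ls] split by simp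
qed

lemma max_independent_sets_shelling_order:
  assumes "finite W" "\<forall>e\<in>H. e \<subseteq> W" "leafy H"
  shows "\<exists>Fs. distinct Fs \<and> set Fs = max_independent_sets W H \<and> shelling_order Fs"
  using assms
proof (induction W arbitrary: H rule: finite_psubset_induct)
  case (psubset W)
  consider "H = {}" | "{} \<in> H" | "H \<noteq> {}" "{} \<notin> H"
    by blast
  then show ?case
  proof cases
    case 1
    then have "max_independent_sets W H = {W}"
      unfolding max_independent_sets_def independent_def by auto
    then show ?thesis
      by (intro exI[of _ "[W]"]) (simp add: shelling_order_def)
  next
    case 2
    then have "max_independent_sets W H = {}"
      unfolding max_independent_sets_def independent_def by auto
    then show ?thesis
      by (intro exI[of _ "[]"]) (simp add: shelling_order_def)
  next
    case 3
    obtain e x where e: "e \<in> H" "x \<in> e"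
      and only_in_e: "\<forall>y\<in>e - {x}. \<forall>f\<in>H. y \<in> f \<longrightarrow> f = e"
      using leafy_obtains_private_edge[OF psubset.prems(2) 3] by blast
    have "e \<subseteq> W"
      using e psubset.prems(1) by blast
    then have smaller: "W - {x} \<subset> W"
      using e(2) by blast
    obtain As where "distinct As" "set As = max_independent_sets (W - {x}) {f\<in>H. x \<notin> f}"
      "shelling_order As"
      using psubset.IH[OF smaller, of "{f\<in>H. x \<notin> f}"] psubset.prems
        leafy_subset[of H "{f\<in>H. x \<notin> f}"]
      by blast
    moreover obtain Ls where "distinct Ls"
      "set Ls = max_independent_sets (W - {x}) ((\<lambda>f. f - {x}) ` H)" "shelling_order Ls"
      using psubset.IH[OF smaller, of "(\<lambda>f. f - {x}) ` H"] psubset.prems leafy_Diff_image[of H x]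
      by blast
    ultimately show ?thesis
      using shelling_order_deletion_then_link[OF psubset.hyps(1) e(1) \<open>e \<subseteq> W\<close> e(2) only_in_e]
      by blast
  qed
qed

lemma simple_graph_edge:
  assumes "simple_graph V E" "{a, b} \<in> E"
  shows "a \<in> V" "b \<in> V" "a \<noteq> b"
proof -
  have "{a, b} \<subseteq> V" "card {a, b} = 2"
    using assms unfolding simple_graph_def by auto
  then show "a \<in> V" "b \<in> V" "a \<noteq> b"
    by auto
qed

lemma nbhd_sym: "u \<in> nbhd E v \<longleftrightarrow> v \<in> nbhd E u"
  unfolding nbhd_def by (simp add: insert_commute)

lemma nbhd_subset:
  assumes "simple_graph V E"
  shows "nbhd E v \<subseteq> V"
proof
  fix u assume "u \<in> nbhd E v"
  then have "{u, v} \<in> E"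
    unfolding nbhd_def by simp
  then show "u \<in> V"
    by (rule simple_graph_edge(1)[OF assms])
qed

lemma closed_non_backtracking_walk_has_cycle:
  assumes sg: "simple_graph V E"
    and edge: "\<And>n. {w n, w (Suc n)} \<in> E" and no_backtrack: "\<And>n. w (Suc (Suc n)) \<noteq> w n"
    and closed: "0 < d" "w i = w (i + d)" and inj: "inj_on w {i..<i + d}"
  shows "has_cycle V E"
proof -
  define p where "p = map w [i..<i + d]"
  have "distinct p"
    unfolding p_def using inj by (simp add: distinct_map)
  moreover have "is_walk V E p"
    unfolding is_walk_def p_def
    using closed(1) edge simple_graph_edge(1)[OF sg edge] by auto
  moreover have "d \<noteq> 1" "d \<noteq> 2"
    using closed(2) simple_graph_edge(3)[OF sg edge[of i]] no_backtrack[of i] by auto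
  then have "length p \<ge> 3"
    using closed(1) unfolding p_def by simp
  moreover have "{last p, hd p} \<in> E"
  proof -
    have "last p = w (i + (d - 1))" "hd p = w (Suc (i + (d - 1)))"
      using closed unfolding p_def by (simp_all add: last_map hd_map)
    then show ?thesis
      using edge by simp
  qed
  ultimately show ?thesis
    unfolding has_cycle_def by blast
qed

lemma non_backtracking_walk_inj:
  assumes sg: "simple_graph V E" and acyclic: "\<not> has_cycle V E"
    and edge: "\<And>n. {w n, w (Suc n)} \<in> E" and no_backtrack: "\<And>n. w (Suc (Suc n)) \<noteq> w n"
  shows "inj w"
proof (rule ccontr)
  let ?period = "\<lambda>d. 0 < d \<and> (\<exists>i. w i = w (i + d))"
  assume "\<not> inj w"
  then obtain i j where "w i = w j" "i < j"
    unfolding inj_def by (metis linorder_neqE_nat)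
  then have "?period (j - i)"
    by (auto intro!: exI[of _ i])
  define d where "d = (LEAST d. ?period d)"
  have "?period d"
    unfolding d_def using \<open>?period (j - i)\<close> by (rule LeastI)
  then obtain i where closed: "0 < d" "w i = w (i + d)"
    by blast
  have "w a \<noteq> w b" if "i \<le> a" "a < b" "b < i + d" for a b
  proof
    assume "w a = w b"
    then have "?period (b - a)"
      using that by (auto intro!: exI[of _ a])
    then have "d \<le> b - a"
      unfolding d_def by (rule Least_le)
    then show False
      using that by simp
  qed
  then have "inj_on w {i..<i + d}"
    by (intro inj_onI) (metis atLeastLessThan_iff linorder_neqE_nat)
  then show False
    using closed_non_backtracking_walk_has_cycle[OF sg edge no_backtrack closed] acyclic by blast
qed

lemma interleaved_walk:
  fixes b c :: "nat \<Rightarrow> 'a"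
  assumes "\<And>n. {b n, c n} \<in> E" "\<And>n. {c n, b (Suc n)} \<in> E"
    and "\<And>n. b (Suc n) \<noteq> b n" "\<And>n. c (Suc n) \<noteq> c n"
  defines "w \<equiv> \<lambda>n. if even n then b (n div 2) else c (n div 2)"
  shows "{w n, w (Suc n)} \<in> E" "w (Suc (Suc n)) \<noteq> w n"
proof -
  have "{w n, w (Suc n)} \<in> E \<and> w (Suc (Suc n)) \<noteq> w n"
  proof (cases "even n")
    case True
    then obtain m where "n = 2 * m" by blast
    then show ?thesis
      using assms(1,3) unfolding w_def by simp
  next
    case False
    then obtain m where "n = Suc (2 * m)"
      by (metis Suc_eq_plus1 oddE)
    then show ?thesis
      using assms(2,4) unfolding w_def by simp
  qed
  then show "{w n, w (Suc n)} \<in> E" "w (Suc (Suc n)) \<noteq> w n"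
    by blast+
qed

lemma acyclic_nbhds_leafy:
  assumes sg: "simple_graph V E" and acyclic: "\<not> has_cycle V E"
  shows "leafy (nbhd E ` V)"
  unfolding leafy_def
proof (intro allI impI)
  fix G assume "G \<noteq> {} \<and> edge_shrinking G (nbhd E ` V)"
  then obtain \<phi> where "G \<noteq> {}" and \<phi>: "inj_on \<phi> G" "\<forall>g\<in>G. \<phi> g \<in> nbhd E ` V \<and> g \<subseteq> \<phi> g"
    unfolding edge_shrinking_def by blast
  then have "\<forall>g\<in>G. \<exists>u. u \<in> V \<and> \<phi> g = nbhd E u"
    by blast
  then obtain v where v: "\<forall>g\<in>G. v g \<in> V \<and> \<phi> g = nbhd E (v g)"
    by (rule bchoice[THEN exE])
  have v_inj: "v g \<noteq> v g'" if "g \<in> G" "g' \<in> G" "g \<noteq> g'" for g g'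
    using \<phi>(1) v that by (metis inj_onD)
  have v_edge: "{y, v g} \<in> E" if "g \<in> G" "y \<in> g" for g y
    using \<phi>(2) v that unfolding nbhd_def by blast
  show "has_leaf G"
  proof (rule ccontr)
    assume "\<not> has_leaf G"
    then obtain g a where chain: "\<And>n. g n \<in> G" "\<And>n. a (Suc n) \<in> g n - {a n}"
      "\<And>n. a (Suc n) \<in> g (Suc n)" "\<And>n. g (Suc n) \<noteq> g n"
      using \<open>G \<noteq> {}\<close> by (rule no_leaf_obtains_chain) blast
    define w where "w n = (if even n then v (g (n div 2)) else a (Suc (n div 2)))" for n
    have "{v (g n), a (Suc n)} \<in> E" for n
      using v_edge[of "g n" "a (Suc n)"] chain by (simp add: insert_commute)
    moreover have "{a (Suc n), v (g (Suc n))} \<in> E" for n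
      using v_edge[of "g (Suc n)" "a (Suc n)"] chain by simp
    moreover have "v (g (Suc n)) \<noteq> v (g n)" for n
      using v_inj chain by blast
    moreover have "a (Suc (Suc n)) \<noteq> a (Suc n)" for n
      using chain(2)[of "Suc n"] by blast
    ultimately have walk: "{w n, w (Suc n)} \<in> E" "w (Suc (Suc n)) \<noteq> w n" for n
      unfolding w_def by (rule interleaved_walk[of "\<lambda>n. v (g n)" "\<lambda>n. a (Suc n)" E])+
    have "inj w"
      using sg acyclic walk by (rule non_backtracking_walk_inj)
    moreover have "range w \<subseteq> V"
      using simple_graph_edge(1)[OF sg walk(1)] by blast
    ultimately have "finite (UNIV :: nat set)"
      using sg unfolding simple_graph_def by (metis finite_imageD finite_subset)
    then show False
      by simp
  qed
qed

lemma total_dom_set_iff_independent_compl: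
  assumes sg: "simple_graph V E" and "D \<subseteq> V"
  shows "total_dom_set V E D \<longleftrightarrow> independent (nbhd E ` V) (V - D)"
proof -
  have "total_dom_set V E D \<longleftrightarrow> (\<forall>v\<in>V. \<exists>d\<in>D. v \<in> nbhd E d)"
    using nbhd_subset[OF sg] assms(2) unfolding total_dom_set_def nbhd_set_def by blast
  also have "\<dots> \<longleftrightarrow> (\<forall>v\<in>V. \<not> nbhd E v \<subseteq> V - D)"
    using nbhd_subset[OF sg] nbhd_sym[of _ E] by blast
  also have "\<dots> \<longleftrightarrow> independent (nbhd E ` V) (V - D)"
    unfolding independent_def by blast
  finally show ?thesis .
qed

lemma total_dom_set_mono:
  assumes "simple_graph V E" "total_dom_set V E D" "D \<subseteq> D'" "D' \<subseteq> V"
  shows "total_dom_set V E D'"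
proof -
  have "nbhd_set E D \<subseteq> nbhd_set E D'" "nbhd_set E D' \<subseteq> V"
    using assms(3) nbhd_subset[OF assms(1)] unfolding nbhd_set_def by auto
  then show ?thesis
    using assms(2,4) unfolding total_dom_set_def by blast
qed

lemma minimal_total_dom_set_iff:
  assumes "simple_graph V E" "D \<subseteq> V"
  shows "minimal_total_dom_set V E D \<longleftrightarrow>
           total_dom_set V E D \<and> (\<forall>y\<in>D. \<not> total_dom_set V E (D - {y}))"
proof (intro iffI conjI ballI)
  fix y assume "minimal_total_dom_set V E D" "y \<in> D"
  then show "\<not> total_dom_set V E (D - {y})"
    unfolding minimal_total_dom_set_def by blast
next
  assume D: "total_dom_set V E D \<and> (\<forall>y\<in>D. \<not> total_dom_set V E (D - {y}))"
  have "\<not> total_dom_set V E D'" if "D' \<subset> D" for D'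
  proof
    assume "total_dom_set V E D'"
    moreover obtain y where "y \<in> D" "D' \<subseteq> D - {y}"
      using \<open>D' \<subset> D\<close> by blast
    ultimately have "total_dom_set V E (D - {y})"
      using total_dom_set_mono assms by blast
    with D \<open>y \<in> D\<close> show False
      by blast
  qed
  with D show "minimal_total_dom_set V E D"
    unfolding minimal_total_dom_set_def by blast
qed (simp add: minimal_total_dom_set_def)

lemma minimal_total_dom_set_iff_max_independent_compl:
  assumes sg: "simple_graph V E" and "D \<subseteq> V"
  shows "minimal_total_dom_set V E D \<longleftrightarrow> V - D \<in> max_independent_sets V (nbhd E ` V)"
proof -
  have "total_dom_set V E (D - {y}) \<longleftrightarrow> independent (nbhd E ` V) (insert y (V - D))"
    if "y \<in> D" for y
  proof -
    have "insert y (V - D) = V - (D - {y})"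
      using that assms(2) by blast
    then show ?thesis
      using total_dom_set_iff_independent_compl[OF sg, of "D - {y}"] assms(2) by auto
  qed
  moreover have "V - (V - D) = D"
    using assms(2) by blast
  ultimately show ?thesis
    unfolding minimal_total_dom_set_iff[OF assms] max_independent_sets_def
    using total_dom_set_iff_independent_compl[OF assms] by auto
qed

lemma stable_complex_facets_eq_max_independent_sets:
  assumes "simple_graph V E"
  shows "stable_complex_facets V E = max_independent_sets V (nbhd E ` V)"
proof (intro set_eqI iffI)
  fix F assume "F \<in> stable_complex_facets V E"
  then obtain D where "F = V - D" "minimal_total_dom_set V E D"
    unfolding stable_complex_facets_def by blast
  moreover have "D \<subseteq> V"
    using calculation(2) unfolding minimal_total_dom_set_def total_dom_set_def by blast
  ultimately show "F \<in> max_independent_sets V (nbhd E ` V)"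
    using minimal_total_dom_set_iff_max_independent_compl[OF assms] by blast
next
  fix F assume F: "F \<in> max_independent_sets V (nbhd E ` V)"
  then have "F = V - (V - F)"
    unfolding max_independent_sets_def by blast
  with F have "minimal_total_dom_set V E (V - F)"
    using minimal_total_dom_set_iff_max_independent_compl[OF assms, of "V - F"] by simp
  then show "F \<in> stable_complex_facets V E"
    unfolding stable_complex_facets_def using \<open>F = V - (V - F)\<close> by blast
qed

lemma unmixed_pure_stable_complex:
  assumes "simple_graph V E" "unmixed V E"
  shows "pure_facets (stable_complex_facets V E)"
  unfolding pure_facets_def
proof (intro ballI)
  fix F G assume "F \<in> stable_complex_facets V E" "G \<in> stable_complex_facets V E"
  then obtain D1 D2 where D: "F = V - D1" "minimal_total_dom_set V E D1"
    "G = V - D2" "minimal_total_dom_set V E D2"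
    unfolding stable_complex_facets_def by blast
  have "D1 \<subseteq> V" "D2 \<subseteq> V"
    using D(2,4) unfolding minimal_total_dom_set_def total_dom_set_def by blast+
  moreover have "card D1 = card D2"
    using assms(2) D(2,4) unfolding unmixed_def by blast
  moreover have "finite V"
    using assms(1) unfolding simple_graph_def by blast
  ultimately show "card F = card G"
    unfolding D by (simp add: card_Diff_subset finite_subset)
qed

theorem theorem4p25:
  fixes V :: "'a set" and E :: "'a set set"
  assumes "is_tree V E"
    and "unmixed V E"
  shows "shellable (stable_complex_facets V E)"
proof -
  have sg: "simple_graph V E" and acyclic: "\<not> has_cycle V E"
    using assms(1) unfolding is_tree_def by auto
  have "finite V"
    using sg unfolding simple_graph_def by blast
  then obtain Fs where "distinct Fs" "set Fs = max_independent_sets V (nbhd E ` V)"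
    "shelling_order Fs"
    using max_independent_sets_shelling_order[of V "nbhd E ` V"]
      nbhd_subset[OF sg] acyclic_nbhds_leafy[OF sg acyclic] by blast
  with unmixed_pure_stable_complex[OF sg assms(2)] show ?thesis
    unfolding shellable_def stable_complex_facets_eq_max_independent_sets[OF sg] by blast
qed

end
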